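(* Let $K$ be an odd prime and $p,m\in\mathbb Z$ with $m\ge0$. Then $$\sum{}'_{\alpha}\check q^{\,p\alpha^2}\alpha^{2m}=x^{\max(0,\frac{K-1}2-m)}\,w\quad\text{for some }w\in\mathbb Z[\check q].$$
   Context: $\check q=e^{2\pi i/K}$, $x=\check q-1$. $\sum'_\alpha$ denotes the sum over odd integers $\alpha$ with $-K\le\alpha\le K$, where the two terms $\alpha=\pm K$ are each weighted by $\frac12$. *)

theory Defs
  imports Complex_Main "HOL-Computational_Algebra.Primes"
begin

definition qchk :: "nat \<Rightarrow> complex" where
  "qchk K = exp (2 * of_real pi * \<i> / of_nat K)"

definition primed_weight :: "nat \<Rightarrow> int \<Rightarrow> complex" where
  "primed_weight K \<alpha> = (if \<bar>\<alpha>\<bar> = int K then 1/2 else 1)"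

definition primed_sum :: "nat \<Rightarrow> (int \<Rightarrow> complex) \<Rightarrow> complex" where
  "primed_sum K f = (\<Sum>\<alpha>\<in>{\<alpha>\<in>{-int K..int K}. odd \<alpha>}. primed_weight K \<alpha> * f \<alpha>)"

definition in_Zq :: "complex \<Rightarrow> complex \<Rightarrow> bool" where
  "in_Zq q w = (\<exists>(c::nat \<Rightarrow> int) N. w = (\<Sum>i<N. of_int (c i) * q ^ i))"

end

theory Submission
  imports Defs "HOL-Computational_Algebra.Polynomial"
begin

text \<open>
  Write \<open>x = q - 1\<close>. The summand is even in \<open>\<alpha>\<close>, so the two half-weighted endpoints combine
  and the primed sum becomes \<open>\<Sum>j<K. q^N\<^sub>j a\<^sub>j^(2m)\<close> with \<open>a\<^sub>j = 2j + 2 - K\<close> and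
  \<open>N\<^sub>j = (p mod K) a\<^sub>j\<^sup>2\<close>. Expanding \<open>q^N = (1 + x)^N\<close>, the coefficient of \<open>x^k\<close> is
  \<open>\<Sum>j. (N\<^sub>j choose k) a\<^sub>j^(2m)\<close>; times \<open>k!\<close> it is the sum of an integer polynomial of degree
  \<open>2k + 2m\<close> over \<open>j < K\<close>, hence divisible by \<open>K\<close> when \<open>2k + 2m < K - 1\<close>, since the power sums
  \<open>\<Sum>j<K. j^i\<close> vanish mod \<open>K\<close> for \<open>i < K - 1\<close>. Finally \<open>K\<close> is divisible by \<open>x^(K-1)\<close> in
  \<open>\<int>[q]\<close>: \<open>(1 + x)^K = 1\<close> and \<open>K | (K choose i)\<close> give \<open>K = -x^(K-1) - K x u\<close>, which can be
  iterated.
\<close>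

lemma in_Zq_monom: "in_Zq q (of_int c * q ^ i)"
  unfolding in_Zq_def
  by (rule exI[of _ "\<lambda>k. if k = i then c else 0"], rule exI[of _ "Suc i"])
     (simp add: if_distrib sum.delta cong: if_cong)

lemma in_Zq_0: "in_Zq q 0"
  unfolding in_Zq_def by (rule exI[of _ "\<lambda>_. 0"], rule exI[of _ 0]) simp

lemma in_Zq_add:
  assumes "in_Zq q a" "in_Zq q b"
  shows "in_Zq q (a + b)"
proof -
  obtain c N d M where a: "a = (\<Sum>i<N. of_int (c i) * q ^ i)" and b: "b = (\<Sum>i<M. of_int (d i) * q ^ i)"
    using assms unfolding in_Zq_def by blast
  define c' where "c' i = (if i < N then c i else 0)" for i
  define d' where "d' i = (if i < M then d i else 0)" for i
  have "a = (\<Sum>i<max N M. of_int (c' i) * q ^ i)"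
    unfolding a c'_def by (intro sum.mono_neutral_cong_left) auto
  moreover have "b = (\<Sum>i<max N M. of_int (d' i) * q ^ i)"
    unfolding b d'_def by (intro sum.mono_neutral_cong_left) auto
  ultimately have "a + b = (\<Sum>i<max N M. of_int (c' i + d' i) * q ^ i)"
    by (simp add: sum.distrib[symmetric] distrib_right)
  then show ?thesis unfolding in_Zq_def by (intro exI)
qed

lemma in_Zq_sum: "(\<And>i. i \<in> A \<Longrightarrow> in_Zq q (f i)) \<Longrightarrow> in_Zq q (\<Sum>i\<in>A. f i)"
  by (induction A rule: infinite_finite_induct) (simp_all add: in_Zq_0 in_Zq_add)

lemma in_Zq_mult:
  assumes "in_Zq q a" "in_Zq q b"
  shows "in_Zq q (a * b)"
proof -
  obtain c N d M where a: "a = (\<Sum>i<N. of_int (c i) * q ^ i)" and b: "b = (\<Sum>i<M. of_int (d i) * q ^ i)"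
    using assms unfolding in_Zq_def by blast
  have "a * b = (\<Sum>i<N. \<Sum>j<M. of_int (c i * d j) * q ^ (i + j))"
    unfolding a b sum_distrib_right sum_distrib_left by (subst sum.swap) (simp add: power_add mult_ac)
  also have "in_Zq q \<dots>" by (intro in_Zq_sum in_Zq_monom)
  finally show ?thesis .
qed

lemma in_Zq_of_int: "in_Zq q (of_int c)"
  using in_Zq_monom[of q c 0] by simp

lemma in_Zq_of_nat: "in_Zq q (of_nat n)"
  using in_Zq_of_int[of q "int n"] by simp

lemma in_Zq_uminus: "in_Zq q a \<Longrightarrow> in_Zq q (- a)"
  using in_Zq_mult[OF in_Zq_of_int[of q "-1"]] by simp

lemma in_Zq_diff: "in_Zq q a \<Longrightarrow> in_Zq q b \<Longrightarrow> in_Zq q (a - b)"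
  using in_Zq_add[OF _ in_Zq_uminus] by simp

lemma in_Zq_power: "in_Zq q a \<Longrightarrow> in_Zq q (a ^ n)"
  by (induction n) (simp_all add: in_Zq_mult in_Zq_of_int[of q 1, simplified])

lemma in_Zq_minus_1: "in_Zq q (q - 1)"
  using in_Zq_diff[OF in_Zq_monom[of q 1 1] in_Zq_of_int[of q 1]] by simp

lemma power_eq_truncated_binomial:
  "\<exists>w. in_Zq q w \<and> q ^ N = (\<Sum>k<n. of_nat (N choose k) * (q - 1) ^ k) + (q - 1) ^ n * w"
proof -
  define x where "x = q - 1"
  define w where "w = (\<Sum>k\<in>{..N} - {..<n}. of_nat (N choose k) * x ^ (k - n))"
  have "q ^ N = (\<Sum>k\<le>N. of_nat (N choose k) * x ^ k)"
    using binomial_ring[of x 1 N] by (simp add: x_def)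
  also have "\<dots> = (\<Sum>k\<in>{..N} \<inter> {..<n}. of_nat (N choose k) * x ^ k)
      + (\<Sum>k\<in>{..N} - {..<n}. of_nat (N choose k) * x ^ k)"
    by (rule sum.Int_Diff) simp
  also have "(\<Sum>k\<in>{..N} \<inter> {..<n}. of_nat (N choose k) * x ^ k) = (\<Sum>k<n. of_nat (N choose k) * x ^ k)"
    by (rule sum.mono_neutral_left) auto
  also have "(\<Sum>k\<in>{..N} - {..<n}. of_nat (N choose k) * x ^ k) = x ^ n * w"
    unfolding w_def sum_distrib_left by (rule sum.cong) (auto simp flip: power_add)
  finally have "q ^ N = (\<Sum>k<n. of_nat (N choose k) * x ^ k) + x ^ n * w" .
  moreover have "in_Zq q w"
    unfolding w_def x_def by (intro in_Zq_sum in_Zq_mult in_Zq_of_nat in_Zq_power in_Zq_minus_1)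
  ultimately show ?thesis unfolding x_def by blast
qed

lemma in_Zq_power_multiple_iterate:
  assumes "in_Zq q x" "in_Zq q a" "in_Zq q u" "in_Zq q v"
    and "a = x ^ n * v + x * a * u"
  shows "\<exists>w. in_Zq q w \<and> a = x ^ n * w"
proof -
  have "\<exists>w. in_Zq q w \<and> a = x ^ s * w" if "s \<le> n" for s
    using that
  proof (induction s)
    case 0
    then show ?case using assms(2) by auto
  next
    case (Suc s)
    then obtain w where w: "in_Zq q w" "a = x ^ s * w" by auto
    have "x ^ n = x ^ Suc s * x ^ (n - Suc s)"
      using Suc.prems by (metis le_add_diff_inverse power_add)
    then have "a = x ^ Suc s * (x ^ (n - Suc s) * v + w * u)"
      by (subst assms(5)) (simp add: w(2) algebra_simps)
    moreover have "in_Zq q (x ^ (n - Suc s) * v + w * u)"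
      by (intro in_Zq_add in_Zq_mult in_Zq_power assms w(1))
    ultimately show ?case by blast
  qed
  then show ?thesis by blast
qed

lemma prime_eq_root_minus_1_power_mult:
  fixes q :: complex
  assumes K: "prime K" and root: "q ^ K = 1" "q \<noteq> 1"
  shows "\<exists>w. in_Zq q w \<and> of_nat K = (q - 1) ^ (K - 1) * w"
proof -
  define x where "x = q - 1"
  define u where "u = (\<Sum>k=2..<K. of_nat ((K choose k) div K) * x ^ (k - 2))"
  have K2: "K \<ge> 2" using prime_ge_2_nat[OF K] .
  have "{..K} = {0, 1, K} \<union> {2..<K}" using K2 by auto
  then have "(x + 1) ^ K = 1 + of_nat K * x + x ^ K + (\<Sum>k=2..<K. of_nat (K choose k) * x ^ k)"
    using K2 by (simp add: binomial_ring sum.union_disjoint)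
  also have "(\<Sum>k=2..<K. of_nat (K choose k) * x ^ k) = x * (x * of_nat K * u)"
    unfolding u_def sum_distrib_left
  proof (rule sum.cong)
    fix k assume k: "k \<in> {2..<K}"
    then have "K choose k = K * ((K choose k) div K)" using dvd_choose_prime[OF _ _ _ K] by simp
    moreover have "x ^ k = x * (x * x ^ (k - 2))" using k
      by (metis atLeastLessThan_iff le_add_diff_inverse power_add power2_eq_square mult.assoc)
    ultimately show "of_nat (K choose k) * x ^ k = x * (x * of_nat K * (of_nat ((K choose k) div K) * x ^ (k - 2)))"
      by (metis (no_types, lifting) mult.assoc mult.left_commute of_nat_mult)
  qed simp
  finally have "x * (of_nat K + x ^ (K - 1) + x * of_nat K * u) = 0"
    using root(1) K2 by (simp add: x_def algebra_simps flip: power_Suc)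
  then have "of_nat K + x ^ (K - 1) + x * of_nat K * u = 0"
    using root(2) by (simp add: x_def)
  then have "of_nat K = x ^ (K - 1) * (- 1) + x * of_nat K * (- u)"
    by (simp add: algebra_simps add_eq_0_iff2)
  moreover have "in_Zq q u"
    unfolding u_def x_def by (intro in_Zq_sum in_Zq_mult in_Zq_of_nat in_Zq_power in_Zq_minus_1)
  ultimately show ?thesis
    unfolding x_def using in_Zq_of_int[of q 1]
    by (intro in_Zq_power_multiple_iterate[where u = "- u" and v = "- 1"] in_Zq_uminus in_Zq_minus_1 in_Zq_of_nat) simp_all
qed

lemma in_Zq_multiple_power_mono:
  assumes "in_Zq q W" "a = (q - 1) ^ N * W" "n \<le> N"
  shows "\<exists>W'. in_Zq q W' \<and> a = (q - 1) ^ n * W'"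
proof -
  have "a = (q - 1) ^ n * ((q - 1) ^ (N - n) * W)"
    using assms(2,3) by (simp add: mult.assoc flip: power_add)
  moreover have "in_Zq q ((q - 1) ^ (N - n) * W)"
    by (intro in_Zq_mult in_Zq_power in_Zq_minus_1 assms(1))
  ultimately show ?thesis by blast
qed

lemma sum_powers_eq_power_mult:
  fixes q :: complex and N :: "'a \<Rightarrow> nat" and b :: "'a \<Rightarrow> int"
  assumes W: "in_Zq q W" "of_int d = (q - 1) ^ n * W"
    and moments: "\<And>k. k < n \<Longrightarrow> d dvd (\<Sum>j\<in>J. int (N j choose k) * b j)"
  shows "\<exists>w. in_Zq q w \<and> (\<Sum>j\<in>J. q ^ N j * of_int (b j)) = (q - 1) ^ n * w"
proof -
  define x where "x = q - 1"
  define t where "t k = (\<Sum>j\<in>J. int (N j choose k) * b j) div d" for k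
  obtain r where r: "\<And>M. in_Zq q (r M)"
    "\<And>M. q ^ M = (\<Sum>k<n. of_nat (M choose k) * x ^ k) + x ^ n * r M"
    using power_eq_truncated_binomial[of q _ n] unfolding x_def by metis
  have "(\<Sum>j\<in>J. q ^ N j * of_int (b j))
      = (\<Sum>k<n. x ^ k * of_int (\<Sum>j\<in>J. int (N j choose k) * b j)) + x ^ n * (\<Sum>j\<in>J. r (N j) * of_int (b j))"
    unfolding r(2) distrib_right sum.distrib sum_distrib_left sum_distrib_right
    by (subst sum.swap) (simp add: mult_ac sum_distrib_left)
  also have "(\<Sum>k<n. x ^ k * of_int (\<Sum>j\<in>J. int (N j choose k) * b j)) = x ^ n * (\<Sum>k<n. x ^ k * W * of_int (t k))"
    unfolding sum_distrib_left
  proof (rule sum.cong)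
    fix k assume "k \<in> {..<n}"
    then have "(\<Sum>j\<in>J. int (N j choose k) * b j) = d * t k"
      using moments unfolding t_def by simp
    then show "x ^ k * of_int (\<Sum>j\<in>J. int (N j choose k) * b j) = x ^ n * (x ^ k * W * of_int (t k))"
      using W(2) by (simp add: x_def mult_ac)
  qed simp
  finally have "(\<Sum>j\<in>J. q ^ N j * of_int (b j))
      = x ^ n * ((\<Sum>k<n. x ^ k * W * of_int (t k)) + (\<Sum>j\<in>J. r (N j) * of_int (b j)))"
    by (simp add: distrib_left)
  moreover have "in_Zq q ((\<Sum>k<n. x ^ k * W * of_int (t k)) + (\<Sum>j\<in>J. r (N j) * of_int (b j)))"
    unfolding x_def by (intro in_Zq_add in_Zq_sum in_Zq_mult in_Zq_power in_Zq_minus_1 in_Zq_of_int W(1) r(1))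
  ultimately show ?thesis unfolding x_def by blast
qed

lemma power_sums_binomial_recurrence:
  "(\<Sum>l\<le>i. int (Suc i choose l) * (\<Sum>j<K. int j ^ l)) = int K ^ Suc i"
proof -
  have step: "int (Suc j) ^ Suc i - int j ^ Suc i = (\<Sum>l\<le>i. int (Suc i choose l) * int j ^ l)" for j
  proof -
    have "(int j + 1) ^ Suc i = (\<Sum>l\<le>i. int (Suc i choose l) * int j ^ l) + int j ^ Suc i"
      using binomial_ring[of "int j" 1 "Suc i"] by (simp add: atMost_Suc)
    then show ?thesis by (metis add_diff_cancel_right' of_nat_Suc add.commute)
  qed
  have "int K ^ Suc i = (\<Sum>j<K. int (Suc j) ^ Suc i - int j ^ Suc i)"
    by (subst sum_lessThan_telescope) simp
  also have "\<dots> = (\<Sum>l\<le>i. int (Suc i choose l) * (\<Sum>j<K. int j ^ l))"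
    unfolding step sum_distrib_left by (rule sum.swap)
  finally show ?thesis by (rule sym)
qed

lemma prime_dvd_power_sum:
  assumes "prime K" "i < K - 1"
  shows "int K dvd (\<Sum>j<K. int j ^ i)"
  using assms(2)
proof (induction i rule: less_induct)
  case (less i)
  have recurrence: "(\<Sum>l<i. int (Suc i choose l) * (\<Sum>j<K. int j ^ l)) + int (Suc i) * (\<Sum>j<K. int j ^ i)
      = int K ^ Suc i"
    using power_sums_binomial_recurrence[of i K] by (simp add: lessThan_Suc_atMost[symmetric])
  have lower: "int K dvd (\<Sum>l<i. int (Suc i choose l) * (\<Sum>j<K. int j ^ l))"
    by (rule dvd_sum, rule dvd_mult, rule less.IH) (use less.prems in auto)
  have "int K dvd int K ^ Suc i" by simp
  then have "int K dvd int (Suc i) * (\<Sum>j<K. int j ^ i)"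
    unfolding recurrence[symmetric] by (rule dvd_add_right_iff[OF lower, THEN iffD1])
  moreover have "\<not> int K dvd int (Suc i)"
    using less.prems by (auto dest!: zdvd_imp_le)
  moreover have "prime (int K)" using assms(1) by simp
  ultimately show ?case using prime_dvd_mult_iff by blast
qed

lemma prime_dvd_poly_sum:
  assumes "prime K" "degree P < K - 1"
  shows "int K dvd (\<Sum>j<K. poly P (int j))"
proof -
  have "(\<Sum>j<K. poly P (int j)) = (\<Sum>i\<le>degree P. coeff P i * (\<Sum>j<K. int j ^ i))"
    unfolding poly_altdef sum_distrib_left by (rule sum.swap)
  also have "int K dvd \<dots>"
    using assms by (intro prime_dvd_power_sum dvd_sum dvd_mult) auto
  finally show ?thesis .
qed

lemma fact_mult_binomial_eq_prod: "fact k * int (n choose k) = (\<Prod>i<k. int n - int i)"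
proof -
  have "(fact k :: real) * real (n choose k) = (\<Prod>i<k. real n - real i)"
    using gbinomial_mult_fact[of k "real n"] by (simp add: binomial_gbinomial atLeast0LessThan)
  then have "real_of_int (fact k * int (n choose k)) = real_of_int (\<Prod>i<k. int n - int i)"
    by simp
  then show ?thesis by (simp only: of_int_eq_iff)
qed

lemma prime_dvd_sum_binomial_poly:
  fixes Q R :: "int poly"
  assumes K: "prime K" and deg: "k < K" "k * degree Q + degree R < K - 1"
    and Q_nonneg: "\<And>j. j < K \<Longrightarrow> poly Q (int j) \<ge> 0"
  shows "int K dvd (\<Sum>j<K. int (nat (poly Q (int j)) choose k) * poly R (int j))"
proof -
  define P where "P = (\<Prod>i<k. Q - [:int i:]) * R"
  have "degree (\<Prod>i<k. Q - [:int i:]) \<le> (\<Sum>i<k. degree (Q - [:int i:]))"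
    using degree_prod_sum_le[of "{..<k}" "\<lambda>i. Q - [:int i:]"] by (simp add: o_def)
  also have "\<dots> \<le> k * degree Q"
    using sum_mono[of "{..<k}" "\<lambda>i. degree (Q - [:int i:])" "\<lambda>_. degree Q"]
    by (simp add: degree_diff_le)
  finally have "degree P < K - 1"
    unfolding P_def using degree_mult_le[of "\<Prod>i<k. Q - [:int i:]" R] deg(2) by linarith
  then have "int K dvd (\<Sum>j<K. poly P (int j))"
    by (rule prime_dvd_poly_sum[OF K])
  also have "(\<Sum>j<K. poly P (int j)) = fact k * (\<Sum>j<K. int (nat (poly Q (int j)) choose k) * poly R (int j))"
    unfolding sum_distrib_left
  proof (rule sum.cong)
    fix j assume "j \<in> {..<K}"
    then have "int (nat (poly Q (int j))) = poly Q (int j)" using Q_nonneg by simp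
    then show "poly P (int j) = fact k * (int (nat (poly Q (int j)) choose k) * poly R (int j))"
      unfolding P_def using fact_mult_binomial_eq_prod[of k "nat (poly Q (int j))"]
      by (simp add: poly_prod mult.assoc)
  qed simp
  finally have "int K dvd fact k * (\<Sum>j<K. int (nat (poly Q (int j)) choose k) * poly R (int j))" .
  moreover have "\<not> int K dvd fact k"
    using prime_dvd_fact_iff[OF K] deg(1) by (metis of_nat_dvd_iff of_nat_fact not_le)
  moreover have "prime (int K)" using K by simp
  ultimately show ?thesis using prime_dvd_mult_iff by blast
qed

lemma prime_dvd_sum_binomial_square_moment:
  assumes "prime K" "0 \<le> c" "2 * k + e < K - 1"
  shows "int K dvd (\<Sum>j<K. int (nat (c * (u * int j + v) ^ 2) choose k) * (u * int j + v) ^ e)"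
proof -
  define A where "A = [:v, u:]"
  have "degree (smult c (A ^ 2)) \<le> 2" "degree (A ^ e) \<le> e"
    unfolding A_def by (auto intro!: order.trans[OF degree_power_le])
  then have "k * degree (smult c (A ^ 2)) + degree (A ^ e) < K - 1"
    using assms(3) mult_le_mono2[of "degree (smult c (A ^ 2))" 2 k] by linarith
  then have "int K dvd (\<Sum>j<K. int (nat (poly (smult c (A ^ 2)) (int j)) choose k) * poly (A ^ e) (int j))"
    using assms by (intro prime_dvd_sum_binomial_poly) auto
  then show ?thesis by (simp add: A_def algebra_simps)
qed

lemma qchk_power_self: "0 < K \<Longrightarrow> qchk K ^ K = 1"
  unfolding qchk_def by (simp flip: exp_of_nat_mult)

lemma qchk_neq_1:
  assumes "2 < K"
  shows "qchk K \<noteq> 1"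
proof -
  have "0 < 2 * pi / K" "2 * pi / K < pi"
    using assms by (auto simp: field_simps)
  then have "0 < Im (qchk K)"
    using assms unfolding qchk_def Im_exp by (simp add: Im_divide power2_eq_square sin_gt_zero)
  then show ?thesis by auto
qed

lemma power_int_mod:
  fixes q :: complex
  assumes "q ^ K = 1"
  shows "q powi z = q powi (z mod int K)"
proof (cases "K = 0")
  case False
  then have "q \<noteq> 0" using assms by (auto simp: power_0_left)
  have "q powi z = q powi (int K * (z div int K) + z mod int K)"
    by simp
  also have "\<dots> = (q powi int K) powi (z div int K) * q powi (z mod int K)"
    using \<open>q \<noteq> 0\<close> by (simp only: power_int_add power_int_mult simp_thms)
  finally show ?thesis using assms by simp
qed simp

lemma power_int_mult_mod:
  fixes q :: complex
  assumes "q ^ K = 1" "0 < K" "0 \<le> z"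
  shows "q powi (p * z) = q ^ nat (p mod int K * z)"
proof -
  have "q powi (p * z) = q powi (p mod int K * z)"
    using power_int_mod[OF assms(1), of "p * z"] power_int_mod[OF assms(1), of "p mod int K * z"]
    by (simp add: mod_mult_left_eq)
  then show ?thesis using assms(2,3) by (simp add: power_int_def)
qed

lemma bij_betw_odd_interval:
  assumes "odd K"
  shows "bij_betw (\<lambda>j. 2 * int j + 2 - int K) {..<K} {\<alpha>\<in>{- int K<..int K}. odd \<alpha>}"
  unfolding bij_betw_def
proof
  show "inj_on (\<lambda>j. 2 * int j + 2 - int K) {..<K}" by (auto intro: inj_onI)
  show "(\<lambda>j. 2 * int j + 2 - int K) ` {..<K} = {\<alpha>\<in>{- int K<..int K}. odd \<alpha>}"
  proof (intro equalityI subsetI)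
    fix \<alpha> assume \<alpha>: "\<alpha> \<in> {\<alpha>\<in>{- int K<..int K}. odd \<alpha>}"
    then have "even (\<alpha> + int K)" using assms by simp
    then obtain t where t: "\<alpha> + int K = 2 * t" by blast
    then have "nat (t - 1) < K" "\<alpha> = 2 * int (nat (t - 1)) + 2 - int K" using \<alpha> by auto
    then show "\<alpha> \<in> (\<lambda>j. 2 * int j + 2 - int K) ` {..<K}" by blast
  qed (use assms in auto)
qed

lemma primed_sum_even:
  assumes "odd K" and even: "\<And>\<alpha>. f (- \<alpha>) = f \<alpha>"
  shows "primed_sum K f = (\<Sum>j<K. f (2 * int j + 2 - int K))"
proof -
  define B where "B = {\<alpha>\<in>{- int K<..int K}. odd \<alpha>}"
  have K: "finite B" "int K \<in> B" "- int K \<notin> B"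
    using assms(1) odd_pos unfolding B_def by (auto intro: finite_subset[of _ "{- int K<..int K}"])
  have weight: "primed_weight K \<alpha> = 1" if "\<alpha> \<in> B - {int K}" for \<alpha>
    using that unfolding B_def primed_weight_def by auto
  have "{\<alpha>\<in>{- int K..int K}. odd \<alpha>} = insert (- int K) B"
    using assms(1) unfolding B_def by auto
  then have "primed_sum K f = f (int K) / 2 + (\<Sum>\<alpha>\<in>B. primed_weight K \<alpha> * f \<alpha>)"
    unfolding primed_sum_def using K even by (simp add: primed_weight_def)
  also have "(\<Sum>\<alpha>\<in>B. primed_weight K \<alpha> * f \<alpha>) = f (int K) / 2 + (\<Sum>\<alpha>\<in>B - {int K}. f \<alpha>)"
    using K weight by (simp add: sum.remove primed_weight_def)
  also have "f (int K) / 2 + (f (int K) / 2 + (\<Sum>\<alpha>\<in>B - {int K}. f \<alpha>)) = (\<Sum>\<alpha>\<in>B. f \<alpha>)"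
    using K by (simp add: sum.remove)
  also have "\<dots> = (\<Sum>j<K. f (2 * int j + 2 - int K))"
    unfolding B_def by (rule sum.reindex_bij_betw[OF bij_betw_odd_interval[OF assms(1)], symmetric])
  finally show ?thesis .
qed

theorem lemma2p1:
  fixes K :: nat and p :: int and m :: nat
  assumes "prime K" and "odd K"
  shows "\<exists>w. in_Zq (qchk K) w \<and>
    primed_sum K (\<lambda>\<alpha>. qchk K powi (p * \<alpha>^2) * of_int \<alpha> ^ (2*m))
      = (qchk K - 1) ^ nat (max 0 ((int K - 1) div 2 - int m)) * w"
proof -
  define q where "q = qchk K"
  define n where "n = (K - 1) div 2 - m"
  define a where "a j = 2 * int j + (2 - int K)" for j
  have K: "2 < K" using assms prime_ge_2_nat[OF assms(1)] by (cases "K = 2") auto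
  have root: "q ^ K = 1" "q \<noteq> 1" unfolding q_def using K qchk_power_self qchk_neq_1 by auto
  have "primed_sum K (\<lambda>\<alpha>. q powi (p * \<alpha>^2) * of_int \<alpha> ^ (2*m))
      = (\<Sum>j<K. q ^ nat (p mod int K * a j ^ 2) * of_int (a j ^ (2 * m)))"
    using K by (subst primed_sum_even[OF assms(2)]) (simp_all add: a_def add_diff_eq power_int_mult_mod[OF root(1)] power_mult)
  moreover obtain W where "in_Zq q W" "of_int (int K) = (q - 1) ^ n * W"
    using prime_eq_root_minus_1_power_mult[OF assms(1) root] in_Zq_multiple_power_mono[of q _ _ "K - 1" n]
    unfolding n_def by fastforce
  moreover have "int K dvd (\<Sum>j<K. int (nat (p mod int K * a j ^ 2) choose k) * a j ^ (2 * m))" if "k < n" for k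
    unfolding a_def using that assms K
    by (intro prime_dvd_sum_binomial_square_moment) (auto simp: n_def elim!: oddE)
  ultimately have "\<exists>w. in_Zq q w \<and> primed_sum K (\<lambda>\<alpha>. q powi (p * \<alpha>^2) * of_int \<alpha> ^ (2*m)) = (q - 1) ^ n * w"
    using sum_powers_eq_power_mult[where J = "{..<K}" and N = "\<lambda>j. nat (p mod int K * a j ^ 2)"
        and b = "\<lambda>j. a j ^ (2 * m)" and d = "int K"] by simp
  moreover have "nat (max 0 ((int K - 1) div 2 - int m)) = n"
    unfolding n_def by linarith
  ultimately show ?thesis unfolding q_def by simp
qed

end
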